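(* The geometric thickness of the complete bipartite graph $K_{6,6}$ is $\overline{\theta}(K_{6,6}) = 2$.
   Context: The geometric thickness $\overline{\theta}(G)$ of a graph $G$ is the smallest integer $k$ such that there is an injective placement of the vertices of $G$ at points of the plane, with each edge drawn as the straight line segment between the points of its endpoints and containing no other vertex point, together with an assignment of each edge to one of $k$ layers, such that no two edges assigned to the same layer cross (i.e., two edges in the same layer meet at most in a common endpoint). *)

theory Defs
  imports "HOL-Analysis.Analysis"
begin

text \<open>Graphs are given by a vertex set V and a set E of edges, each edge a
two-element subset of V.\<close>

definition edge_seg :: "('v \<Rightarrow> real \<times> real) \<Rightarrow> 'v set \<Rightarrow> (real \<times> real) set" where
  "edge_seg p e = convex hull (p ` e)"

definition geom_layered :: "'v set \<Rightarrow> 'v set set \<Rightarrow> nat \<Rightarrow> bool" where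
  "geom_layered V E k \<longleftrightarrow>
    (\<exists>p :: 'v \<Rightarrow> real \<times> real. \<exists>L :: 'v set \<Rightarrow> nat.
       inj_on p V \<and>
       (\<forall>e\<in>E. \<forall>w\<in>V. w \<notin> e \<longrightarrow> p w \<notin> edge_seg p e) \<and>
       (\<forall>e\<in>E. L e < k) \<and>
       (\<forall>e\<in>E. \<forall>e'\<in>E. e \<noteq> e' \<and> L e = L e' \<longrightarrow>
           edge_seg p e \<inter> edge_seg p e' \<subseteq> p ` (e \<inter> e')))"

definition geometric_thickness :: "'v set \<Rightarrow> 'v set set \<Rightarrow> nat" where
  "geometric_thickness V E = (LEAST k. geom_layered V E k)"

definition K66_V :: "(nat + nat) set" where
  "K66_V = Inl ` {..<6} \<union> Inr ` {..<6}"

definition K66_E :: "(nat + nat) set set" where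
  "K66_E = {{Inl i, Inr j} | i j. i < (6::nat) \<and> j < (6::nat)}"

end

theory Submission
  imports Defs "HOL-Computational_Algebra.Polynomial"
begin

text \<open>
  Two layers suffice: an explicit drawing of \<open>K\<^sub>6\<^sub>,\<^sub>6\<close> with integer coordinates
  and a two-colouring of its edges is verified by exact evaluation of orientation
  determinants.

  One layer does not suffice, because \<open>K\<^sub>3\<^sub>,\<^sub>3\<close> has no straight-line drawing in
  which independent edges are disjoint. Moving the points slightly along the parabola
  \<open>t \<mapsto> (t, t\<^sup>2)\<close> keeps the finitely many disjoint compact segments disjoint and
  puts the points in general position, since every orientation determinant becomes a
  quadratic polynomial in the displacement with nonzero leading coefficient. In general
  position the signs of the orientation determinants are tied together by the
  Grassmann-Pluecker relations and, for disjoint independent edges, by the non-crossing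
  conditions; these sign conditions are propositionally unsatisfiable.
\<close>

definition orient :: "'a::comm_ring \<times> 'a \<Rightarrow> 'a \<times> 'a \<Rightarrow> 'a \<times> 'a \<Rightarrow> 'a" where
  "orient a b c = (fst b - fst a) * (snd c - snd a) - (snd b - snd a) * (fst c - fst a)"

definition same_side :: "'a::linordered_idom \<times> 'a \<Rightarrow> 'a \<times> 'a \<Rightarrow> 'a \<times> 'a \<Rightarrow> 'a \<times> 'a \<Rightarrow> bool" where
  "same_side a x b y \<longleftrightarrow> 0 < orient a x b * orient a x y"

definition general_position :: "'v set \<Rightarrow> ('v \<Rightarrow> real \<times> real) \<Rightarrow> bool" where
  "general_position V p \<longleftrightarrow>
    (\<forall>u\<in>V. \<forall>v\<in>V. \<forall>w\<in>V. distinct [u, v, w] \<longrightarrow> orient (p u) (p v) (p w) \<noteq> 0)"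

lemma general_positionD:
  "general_position V p \<Longrightarrow> u \<in> V \<Longrightarrow> v \<in> V \<Longrightarrow> w \<in> V \<Longrightarrow> distinct [u, v, w] \<Longrightarrow>
    orient (p u) (p v) (p w) \<noteq> 0"
  by (simp add: general_position_def)

lemma orient_swap12: "orient b a c = - orient a b c"
  by (simp add: orient_def algebra_simps)

lemma orient_swap23: "orient a c b = - orient a b c"
  by (simp add: orient_def algebra_simps)

lemma orient_degenerate [simp]: "orient a a c = 0" "orient a b b = 0" "orient a b a = 0"
  by (simp_all add: orient_def mult.commute)

lemma orient_grassmann_pluecker:
  "orient a b c * orient a d e - orient a b d * orient a c e + orient a b e * orient a c d = 0"
  by (simp add: orient_def algebra_simps)

lemma orient_four_points: "orient b c d - orient a c d + orient a b d - orient a b c = 0"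
  by (simp add: orient_def algebra_simps)

lemma orient_of_int:
  "orient (map_prod of_int of_int a) (map_prod of_int of_int b) (map_prod of_int of_int c)
    = (of_int (orient a b c) :: 'a::comm_ring_1)"
  by (cases a; cases b; cases c) (simp add: orient_def)

lemma same_side_of_int:
  "same_side (map_prod of_int of_int a) (map_prod of_int of_int x) (map_prod of_int of_int b)
     (map_prod of_int of_int y) \<longleftrightarrow> same_side a x b y"
  unfolding same_side_def orient_of_int by (metis of_int_0_less_iff of_int_mult)

lemma orient_convex_combination:
  "orient a b ((1 - u) *\<^sub>R c + u *\<^sub>R d) = (1 - u) * orient a b c + u * orient a b d"
  by (simp add: orient_def algebra_simps)

lemma orient_parabola:
  fixes r s t :: real
  shows "orient (r, r\<^sup>2) (s, s\<^sup>2) (t, t\<^sup>2) = (s - r) * (t - r) * (t - s)"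
  by (simp add: orient_def power2_eq_square algebra_simps)

lemma convex_combination_in_closed_segment:
  "0 \<le> u \<Longrightarrow> u \<le> 1 \<Longrightarrow> (1 - u) *\<^sub>R a + u *\<^sub>R b \<in> closed_segment a b"
  by (auto simp: closed_segment_def)

lemma orient_closed_segment:
  fixes a b z :: "real \<times> real"
  assumes "z \<in> closed_segment a b"
  shows "orient a b z = 0"
  using assms by (auto simp: in_segment orient_convex_combination)

lemma closed_segment_disjoint_if_same_side:
  fixes a x b y :: "real \<times> real"
  assumes "same_side a x b y"
  shows "closed_segment a x \<inter> closed_segment b y = {}"
proof -
  have same_sign: "0 < orient a x b * orient a x y" using assms by (simp add: same_side_def)
  have "orient a x z \<noteq> 0" if z: "z \<in> closed_segment b y" for z
  proof -
    obtain u where u: "0 \<le> u" "u \<le> 1" "z = (1 - u) *\<^sub>R b + u *\<^sub>R y"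
      using z by (auto simp: in_segment)
    have "orient a x z * orient a x b = (1 - u) * (orient a x b)\<^sup>2 + u * (orient a x b * orient a x y)"
      unfolding u(3) orient_convex_combination by (simp add: algebra_simps power2_eq_square)
    also have "\<dots> > 0"
    proof (cases "u = 1")
      case False
      have "orient a x b \<noteq> 0" using same_sign by auto
      then show ?thesis using u False same_sign by (intro add_pos_nonneg) auto
    qed (use same_sign in simp)
    finally show ?thesis by auto
  qed
  then show ?thesis using orient_closed_segment by blast
qed

lemma closed_segments_common_endpoint:
  fixes a x y :: "real \<times> real"
  assumes "orient a x y \<noteq> 0"
  shows "closed_segment a x \<inter> closed_segment a y \<subseteq> {a}"
proof
  fix z assume z: "z \<in> closed_segment a x \<inter> closed_segment a y"
  then obtain u where u: "0 \<le> u" "u \<le> 1" "z = (1 - u) *\<^sub>R a + u *\<^sub>R y"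
    using in_segment(1) by (metis IntD2)
  have "u * orient a x y = orient a x z"
    by (simp add: u(3) orient_convex_combination)
  also have "\<dots> = 0" using z orient_closed_segment by blast
  finally show "z \<in> {a}" using assms u by simp
qed

lemma closed_segments_meet_if_straddle:
  fixes a x b y :: "real \<times> real"
  assumes "orient a x b * orient a x y < 0" "orient b y a * orient b y x < 0"
  shows "closed_segment a x \<inter> closed_segment b y \<noteq> {}"
proof -
  define \<alpha> \<beta> \<gamma> \<delta>
    where "\<alpha> = orient b y a" and "\<beta> = orient b y x" and "\<gamma> = orient a x b" and "\<delta> = orient a x y"
  define s t where "s = \<alpha> / (\<alpha> - \<beta>)" and "t = \<gamma> / (\<gamma> - \<delta>)"
  have "\<alpha> * \<beta> < 0" "\<gamma> * \<delta> < 0" using assms by (simp_all add: \<alpha>_def \<beta>_def \<gamma>_def \<delta>_def)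
  then have nonzero: "\<alpha> - \<beta> \<noteq> 0" "\<gamma> - \<delta> \<noteq> 0"
    by (auto simp: mult_less_0_iff)
  have "0 \<le> s" "s \<le> 1" "0 \<le> t" "t \<le> 1"
    using \<open>\<alpha> * \<beta> < 0\<close> \<open>\<gamma> * \<delta> < 0\<close> nonzero
    by (auto simp: s_def t_def mult_less_0_iff divide_simps)
  have "\<alpha> - \<beta> = \<delta> - \<gamma>"
    by (simp add: \<alpha>_def \<beta>_def \<gamma>_def \<delta>_def orient_def algebra_simps)
  with nonzero have "(1 - s) *\<^sub>R a + s *\<^sub>R x = (1 - t) *\<^sub>R b + t *\<^sub>R y"
    unfolding s_def t_def \<alpha>_def \<beta>_def \<gamma>_def \<delta>_def
    by (simp add: prod_eq_iff divide_simps) (simp add: orient_def algebra_simps)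
  moreover have "(1 - s) *\<^sub>R a + s *\<^sub>R x \<in> closed_segment a x"
    using \<open>0 \<le> s\<close> \<open>s \<le> 1\<close> by (rule convex_combination_in_closed_segment)
  moreover have "(1 - t) *\<^sub>R b + t *\<^sub>R y \<in> closed_segment b y"
    using \<open>0 \<le> t\<close> \<open>t \<le> 1\<close> by (rule convex_combination_in_closed_segment)
  ultimately have "(1 - s) *\<^sub>R a + s *\<^sub>R x \<in> closed_segment a x \<inter> closed_segment b y"
    by simp
  then show ?thesis by auto
qed

lemma closed_segment_near:
  fixes a x a' x' :: "'a::real_normed_vector"
  assumes "z \<in> closed_segment a' x'" "dist a' a \<le> e" "dist x' x \<le> e"
  shows "\<exists>w\<in>closed_segment a x. dist z w \<le> e"
proof -
  obtain u where u: "0 \<le> u" "u \<le> 1" "z = (1 - u) *\<^sub>R a' + u *\<^sub>R x'"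
    using assms(1) by (auto simp: in_segment)
  define w where "w = (1 - u) *\<^sub>R a + u *\<^sub>R x"
  have "dist z w = norm ((1 - u) *\<^sub>R (a' - a) + u *\<^sub>R (x' - x))"
    by (simp add: u(3) w_def dist_norm algebra_simps)
  also have "\<dots> \<le> (1 - u) * dist a' a + u * dist x' x"
    using u by (intro order_trans[OF norm_triangle_ineq]) (simp add: dist_norm)
  also have "\<dots> \<le> (1 - u) * e + u * e"
    using u assms(2,3) by (intro add_mono mult_left_mono) auto
  also have "\<dots> = e" by (simp add: algebra_simps)
  finally have "dist z w \<le> e" .
  moreover have "w \<in> closed_segment a x"
    unfolding w_def using u(1,2) by (rule convex_combination_in_closed_segment)
  ultimately show ?thesis by (intro bexI)
qed

lemma eventually_disjoint_closed_segments:
  fixes a x b y :: "'a::{real_normed_vector, heine_borel}"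
  assumes "closed_segment a x \<inter> closed_segment b y = {}"
    and "(fa \<longlongrightarrow> a) F" "(fx \<longlongrightarrow> x) F" "(fb \<longlongrightarrow> b) F" "(fy \<longlongrightarrow> y) F"
  shows "\<forall>\<^sub>F t in F. closed_segment (fa t) (fx t) \<inter> closed_segment (fb t) (fy t) = {}"
proof -
  obtain \<delta> where "\<delta> > 0" and \<delta>: "\<forall>v\<in>closed_segment a x. \<forall>w\<in>closed_segment b y. \<delta> \<le> dist v w"
    using separate_compact_closed[OF compact_segment closed_segment assms(1)] by auto
  then have third: "\<delta> / 3 > 0" by simp
  have "\<forall>\<^sub>F t in F. dist (fa t) a \<le> \<delta> / 3 \<and> dist (fx t) x \<le> \<delta> / 3 \<and> dist (fb t) b \<le> \<delta> / 3 \<and>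
      dist (fy t) y \<le> \<delta> / 3"
    using assms(2-5)[THEN tendstoD, OF third] by (auto simp: eventually_conj_iff elim: eventually_mono)
  then show ?thesis
  proof (rule eventually_mono)
    fix t assume near: "dist (fa t) a \<le> \<delta> / 3 \<and> dist (fx t) x \<le> \<delta> / 3 \<and> dist (fb t) b \<le> \<delta> / 3 \<and>
      dist (fy t) y \<le> \<delta> / 3"
    show "closed_segment (fa t) (fx t) \<inter> closed_segment (fb t) (fy t) = {}"
    proof (rule ccontr)
      assume "closed_segment (fa t) (fx t) \<inter> closed_segment (fb t) (fy t) \<noteq> {}"
      then obtain z where z: "z \<in> closed_segment (fa t) (fx t)" "z \<in> closed_segment (fb t) (fy t)"
        by auto
      obtain v where v: "v \<in> closed_segment a x" "dist z v \<le> \<delta> / 3"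
        using closed_segment_near[OF z(1)] near by meson
      obtain w where w: "w \<in> closed_segment b y" "dist z w \<le> \<delta> / 3"
        using closed_segment_near[OF z(2)] near by meson
      have "\<delta> \<le> dist v w" using \<delta> v(1) w(1) by simp
      also have "\<dots> \<le> dist z v + dist z w" by (rule dist_triangle3)
      also have "\<dots> < \<delta>" using v w \<open>\<delta> > 0\<close> by linarith
      finally show False by simp
    qed
  qed
qed

lemma eventually_poly_nonzero_at:
  fixes p :: "'a::{idom, t1_space} poly"
  assumes "p \<noteq> 0"
  shows "\<forall>\<^sub>F s in at t. poly p s \<noteq> 0"
  using islimpt_finite[OF poly_roots_finite[OF assms]] by (simp add: islimpt_iff_eventually)

lemma eventually_orient_perturbation_nonzero:
  fixes a b c u v w :: "real \<times> real"
  assumes "orient u v w \<noteq> 0"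
  shows "\<forall>\<^sub>F s in at 0. orient (a + s *\<^sub>R u) (b + s *\<^sub>R v) (c + s *\<^sub>R w) \<noteq> 0"
proof -
  define k where "k = (fst b - fst a) * (snd w - snd u) + (fst v - fst u) * (snd c - snd a)
     - (snd b - snd a) * (fst w - fst u) - (snd v - snd u) * (fst c - fst a)"
  have quadratic:
    "orient (a + s *\<^sub>R u) (b + s *\<^sub>R v) (c + s *\<^sub>R w) = poly [:orient a b c, k, orient u v w:] s" for s
    by (simp add: k_def orient_def algebra_simps)
  have "\<forall>\<^sub>F s in at 0. poly [:orient a b c, k, orient u v w:] s \<noteq> 0"
    using assms by (intro eventually_poly_nonzero_at) simp
  then show ?thesis by (simp only: quadratic)
qed

lemma eventually_general_position_parabola_perturbation:
  fixes P :: "nat \<Rightarrow> real \<times> real"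
  shows "\<forall>\<^sub>F s in at 0. general_position {..<n} (\<lambda>i. P i + s *\<^sub>R (real i, (real i)\<^sup>2))"
proof -
  have "\<forall>\<^sub>F s in at 0. orient (P i + s *\<^sub>R (real i, (real i)\<^sup>2)) (P j + s *\<^sub>R (real j, (real j)\<^sup>2))
      (P k + s *\<^sub>R (real k, (real k)\<^sup>2)) \<noteq> 0" if "distinct [i, j, k]" for i j k
    using that by (intro eventually_orient_perturbation_nonzero) (simp add: orient_parabola)
  then show ?thesis by (simp add: general_position_def eventually_ball_finite_distrib)
qed

lemma K33_crossing_in_general_position:
  fixes P :: "nat \<Rightarrow> real \<times> real"
  assumes "general_position {..<6} P"
    and disjoint: "\<forall>a\<in>{..<3}. \<forall>b\<in>{..<3}. \<forall>x\<in>{3..<6}. \<forall>y\<in>{3..<6}. a \<noteq> b \<longrightarrow> x \<noteq> y \<longrightarrow>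
      closed_segment (P a) (P x) \<inter> closed_segment (P b) (P y) = {}"
  shows False
proof -
  let ?o = "\<lambda>i j k. orient (P i) (P j) (P k)"
  have sort12: "?o i j k = - ?o j i k" if "j < i" for i j k
    by (rule orient_swap12)
  have sort23: "?o i j k = - ?o i k j" if "k < j" for i j k
    by (rule orient_swap23)
  have negative_iff: "?o i j k < 0 \<longleftrightarrow> \<not> 0 < ?o i j k"
    if "distinct [i, j, k]" "i < 6" "j < 6" "k < 6" for i j k
    using general_positionD[OF assms(1), of i j k] that by auto
  have alternating_sum3: "\<not> (0 < t1 \<and> t2 < 0 \<and> 0 < t3) \<and> \<not> (t1 < 0 \<and> 0 < t2 \<and> t3 < 0)"
    if "t1 - t2 + t3 = 0" for t1 t2 t3 :: real
    using that by linarith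
  have alternating_sum4:
    "\<not> (0 < t1 \<and> t2 < 0 \<and> 0 < t3 \<and> t4 < 0) \<and> \<not> (t1 < 0 \<and> 0 < t2 \<and> t3 < 0 \<and> 0 < t4)"
    if "t1 - t2 + t3 - t4 = 0" for t1 t2 t3 t4 :: real
    using that by linarith
  have no_straddle: "\<not> (?o a x b * ?o a x y < 0 \<and> ?o b y a * ?o b y x < 0)"
    if "a < 3" "b < 3" "a \<noteq> b" "3 \<le> x" "x < 6" "3 \<le> y" "y < 6" "x \<noteq> y" for a b x y
    using closed_segments_meet_if_straddle[of "P a" "P x" "P b" "P y"] disjoint[rule_format, of a b x y] that
    by auto
  note crossings =
    no_straddle[of 0 1 3 4]
    no_straddle[of 0 1 3 5]
    no_straddle[of 0 1 4 3]
    no_straddle[of 0 1 4 5]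
    no_straddle[of 0 1 5 3]
    no_straddle[of 0 1 5 4]
    no_straddle[of 0 2 3 4]
    no_straddle[of 0 2 3 5]
    no_straddle[of 0 2 4 3]
    no_straddle[of 0 2 4 5]
    no_straddle[of 0 2 5 3]
    no_straddle[of 0 2 5 4]
    no_straddle[of 1 2 3 4]
    no_straddle[of 1 2 3 5]
    no_straddle[of 1 2 4 3]
    no_straddle[of 1 2 4 5]
    no_straddle[of 1 2 5 3]
    no_straddle[of 1 2 5 4]
  txt \<open>After rewriting every orientation, by antisymmetry, to one of an increasing index
    triple, the eighteen non-crossing conditions and the following fifteen sign relations
    admit no consistent choice of signs.\<close>
  note relations =
    alternating_sum3[OF orient_grassmann_pluecker[of "P 2" "P 0" "P 1" "P 4" "P 5"]]
    alternating_sum3[OF orient_grassmann_pluecker[of "P 0" "P 1" "P 2" "P 4" "P 5"]]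
    alternating_sum3[OF orient_grassmann_pluecker[of "P 3" "P 0" "P 2" "P 4" "P 5"]]
    alternating_sum3[OF orient_grassmann_pluecker[of "P 4" "P 0" "P 2" "P 3" "P 5"]]
    alternating_sum3[OF orient_grassmann_pluecker[of "P 4" "P 0" "P 1" "P 3" "P 5"]]
    alternating_sum3[OF orient_grassmann_pluecker[of "P 5" "P 1" "P 2" "P 3" "P 4"]]
    alternating_sum3[OF orient_grassmann_pluecker[of "P 5" "P 0" "P 1" "P 2" "P 3"]]
    alternating_sum3[OF orient_grassmann_pluecker[of "P 1" "P 0" "P 2" "P 4" "P 5"]]
    alternating_sum3[OF orient_grassmann_pluecker[of "P 3" "P 0" "P 1" "P 2" "P 4"]]
    alternating_sum3[OF orient_grassmann_pluecker[of "P 2" "P 0" "P 1" "P 3" "P 4"]]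
    alternating_sum3[OF orient_grassmann_pluecker[of "P 3" "P 0" "P 1" "P 2" "P 5"]]
    alternating_sum3[OF orient_grassmann_pluecker[of "P 3" "P 0" "P 1" "P 4" "P 5"]]
    alternating_sum3[OF orient_grassmann_pluecker[of "P 2" "P 0" "P 1" "P 3" "P 5"]]
    alternating_sum3[OF orient_grassmann_pluecker[of "P 1" "P 2" "P 3" "P 4" "P 5"]]
    alternating_sum4[OF orient_four_points[of "P 1" "P 3" "P 4" "P 5"]]
  note normalize = sort12 sort23 negative_iff zero_less_mult_iff mult_less_0_iff
  show False
    using relations crossings by (simp add: normalize) sat
qed

lemma K33_independent_edges_cross:
  fixes A B :: "nat \<Rightarrow> real \<times> real"
  shows "\<exists>a<3. \<exists>b<3. \<exists>x<3. \<exists>y<3. a \<noteq> b \<and> x \<noteq> y \<and>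
    closed_segment (A a) (B x) \<inter> closed_segment (A b) (B y) \<noteq> {}"
proof (rule ccontr)
  assume no_crossing: "\<not> ?thesis"
  define P where "P n = (if n < 3 then A n else B (n - 3))" for n
  define Q where "Q s = (\<lambda>n. P n + s *\<^sub>R (real n, (real n)\<^sup>2))" for s
  have disjoint: "closed_segment (P a) (P x) \<inter> closed_segment (P b) (P y) = {}"
    if "a < 3" "b < 3" "a \<noteq> b" "3 \<le> x" "x < 6" "3 \<le> y" "y < 6" "x \<noteq> y" for a b x y
  proof -
    have "x - 3 < 3" "y - 3 < 3" "x - 3 \<noteq> y - 3" using that by auto
    with no_crossing that have "closed_segment (A a) (B (x - 3)) \<inter> closed_segment (A b) (B (y - 3)) = {}"
      by blast
    then show ?thesis using that by (simp add: P_def)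
  qed
  have lim: "((\<lambda>s. Q s n) \<longlongrightarrow> P n) (at 0)" for n
    unfolding Q_def by (auto intro!: tendsto_eq_intros simp: zero_prod_def)
  have "\<forall>\<^sub>F s in at 0. closed_segment (Q s a) (Q s x) \<inter> closed_segment (Q s b) (Q s y) = {}"
    if "a < 3" "b < 3" "a \<noteq> b" "3 \<le> x" "x < 6" "3 \<le> y" "y < 6" "x \<noteq> y" for a b x y
    by (rule eventually_disjoint_closed_segments[OF disjoint[OF that] lim lim lim lim])
  then have eventually_disjoint: "\<forall>\<^sub>F s in at 0.
      \<forall>a\<in>{..<3}. \<forall>b\<in>{..<3}. \<forall>x\<in>{3..<6}. \<forall>y\<in>{3..<6}. a \<noteq> b \<longrightarrow> x \<noteq> y \<longrightarrow>
      closed_segment (Q s a) (Q s x) \<inter> closed_segment (Q s b) (Q s y) = {}"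
    by (simp add: eventually_ball_finite_distrib)
  have eventually_general_position: "\<forall>\<^sub>F s in at 0. general_position {..<6} (Q s)"
    unfolding Q_def by (rule eventually_general_position_parabola_perturbation)
  have "\<exists>s. general_position {..<6} (Q s) \<and>
      (\<forall>a\<in>{..<3}. \<forall>b\<in>{..<3}. \<forall>x\<in>{3..<6}. \<forall>y\<in>{3..<6}. a \<noteq> b \<longrightarrow> x \<noteq> y \<longrightarrow>
        closed_segment (Q s a) (Q s x) \<inter> closed_segment (Q s b) (Q s y) = {})"
    using eventually_happens'[OF at_neq_bot]
      eventually_conj[OF eventually_general_position eventually_disjoint] by blast
  then show False
    using K33_crossing_in_general_position by blast
qed

lemma edge_seg_doubleton: "edge_seg p {u, v} = closed_segment (p u) (p v)"
  by (simp add: edge_seg_def segment_convex_hull)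

lemma edge_seg_inter_adjacent:
  assumes "orient (p u) (p v) (p w) \<noteq> 0"
  shows "edge_seg p {u, v} \<inter> edge_seg p {u, w} \<subseteq> p ` ({u, v} \<inter> {u, w})"
  using closed_segments_common_endpoint[OF assms] by (auto simp: edge_seg_doubleton)

lemma geom_layered_if_general_position:
  fixes p :: "'v \<Rightarrow> real \<times> real"
  assumes edges: "\<And>e. e \<in> E \<Longrightarrow> \<exists>u\<in>V. \<exists>v\<in>V. u \<noteq> v \<and> e = {u, v}"
    and general_position: "general_position V p"
    and third_vertex: "\<And>u v. \<exists>w\<in>V. w \<noteq> u \<and> w \<noteq> v"
    and layers: "\<And>e. e \<in> E \<Longrightarrow> L e < k"
    and independent: "\<And>e e'. e \<in> E \<Longrightarrow> e' \<in> E \<Longrightarrow> e \<inter> e' = {} \<Longrightarrow> L e = L e' \<Longrightarrow>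
      edge_seg p e \<inter> edge_seg p e' = {}"
  shows "geom_layered V E k"
  unfolding geom_layered_def
proof (intro exI[of _ p] exI[of _ L] conjI ballI impI)
  show "inj_on p V"
  proof (rule inj_onI, rule ccontr)
    fix u v assume "u \<in> V" "v \<in> V" "p u = p v" "u \<noteq> v"
    moreover obtain w where "w \<in> V" "w \<noteq> u" "w \<noteq> v" using third_vertex by blast
    ultimately show False using general_positionD[OF general_position, of u v w] by simp
  qed
next
  fix e w assume "e \<in> E" "w \<in> V" "w \<notin> e"
  moreover obtain u v where "u \<in> V" "v \<in> V" "u \<noteq> v" "e = {u, v}" using edges \<open>e \<in> E\<close> by blast
  ultimately show "p w \<notin> edge_seg p e"
    using general_positionD[OF general_position, of u v w] orient_closed_segment[where a = "p u" and b = "p v" and z = "p w"]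
    by (auto simp: edge_seg_doubleton)
next
  fix e assume "e \<in> E"
  then show "L e < k" by (rule layers)
next
  fix e e' assume ee': "e \<in> E" "e' \<in> E" "e \<noteq> e' \<and> L e = L e'"
  show "edge_seg p e \<inter> edge_seg p e' \<subseteq> p ` (e \<inter> e')"
  proof (cases "e \<inter> e' = {}")
    case True
    then show ?thesis using independent ee' by simp
  next
    case False
    then obtain c where "c \<in> e" "c \<in> e'" by blast
    then obtain x y where "e = {c, x}" "e' = {c, y}" "distinct [c, x, y]" "c \<in> V" "x \<in> V" "y \<in> V"
      using edges[OF ee'(1)] edges[OF ee'(2)] ee'(3) by (auto simp: doubleton_eq_iff)
    then show ?thesis using edge_seg_inter_adjacent general_positionD[OF general_position] by metis
  qed
qed

definition K66_red :: "(int \<times> int) list" where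
  "K66_red = [(-319, 128), (415, -387), (236, 124), (257, -171), (-374, 368), (-426, 467)]"

definition K66_blue :: "(int \<times> int) list" where
  "K66_blue = [(341, 183), (845, 190), (-251, -380), (-623, -541), (-65, -218), (-136, 147)]"

definition K66_point :: "nat + nat \<Rightarrow> int \<times> int" where
  "K66_point v = (case v of Inl i \<Rightarrow> K66_red ! i | Inr j \<Rightarrow> K66_blue ! j)"

definition K66_position :: "nat + nat \<Rightarrow> real \<times> real" where
  "K66_position v = map_prod of_int of_int (K66_point v)"

definition K66_layer1 :: "(nat \<times> nat) list" where
  "K66_layer1 = [(0, 2), (0, 4), (1, 0), (1, 2), (1, 4), (1, 5), (2, 0), (2, 5), (3, 0), (3, 5),
    (4, 2), (4, 4), (5, 0), (5, 1), (5, 2), (5, 4), (5, 5)]"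

definition K66_layer :: "(nat + nat) set \<Rightarrow> nat" where
  "K66_layer e = (if \<exists>(i, j)\<in>set K66_layer1. e = {Inl i, Inr j} then 1 else 0)"

lemma K66_general_position_check:
  "\<forall>u\<in>K66_V. \<forall>v\<in>K66_V. \<forall>w\<in>K66_V.
    distinct [u, v, w] \<longrightarrow> orient (K66_point u) (K66_point v) (K66_point w) \<noteq> 0"
  unfolding K66_V_def lessThan_atLeast0 atLeastLessThan_upt K66_point_def K66_red_def K66_blue_def
  by code_simp

lemma K66_layers_check:
  "\<forall>i\<in>{..<6}. \<forall>j\<in>{..<6}. \<forall>i'\<in>{..<6}. \<forall>j'\<in>{..<6}.
    i \<noteq> i' \<and> j \<noteq> j' \<and> ((i, j) \<in> set K66_layer1 \<longleftrightarrow> (i', j') \<in> set K66_layer1) \<longrightarrow>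
    same_side (K66_point (Inl i)) (K66_point (Inr j)) (K66_point (Inl i')) (K66_point (Inr j')) \<or>
    same_side (K66_point (Inl i')) (K66_point (Inr j')) (K66_point (Inl i)) (K66_point (Inr j))"
  unfolding lessThan_atLeast0 atLeastLessThan_upt K66_point_def K66_red_def K66_blue_def K66_layer1_def
  by code_simp

lemma K66_E_iff: "e \<in> K66_E \<longleftrightarrow> (\<exists>i<6. \<exists>j<6. e = {Inl i, Inr j})"
  by (auto simp: K66_E_def)

lemma K66_layer_edge: "K66_layer {Inl i, Inr j} = (if (i, j) \<in> set K66_layer1 then 1 else 0)"
  by (auto simp: K66_layer_def doubleton_eq_iff)

lemma K66_same_layer_disjoint:
  assumes "e \<in> K66_E" "e' \<in> K66_E" "e \<inter> e' = {}" "K66_layer e = K66_layer e'"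
  shows "edge_seg K66_position e \<inter> edge_seg K66_position e' = {}"
proof -
  obtain i j i' j' where ij: "i < 6" "j < 6" "e = {Inl i, Inr j}"
    and ij': "i' < 6" "j' < 6" "e' = {Inl i', Inr j'}"
    using assms(1,2) by (auto simp: K66_E_iff)
  then have "same_side (K66_point (Inl i)) (K66_point (Inr j)) (K66_point (Inl i')) (K66_point (Inr j')) \<or>
    same_side (K66_point (Inl i')) (K66_point (Inr j')) (K66_point (Inl i)) (K66_point (Inr j))"
    using K66_layers_check assms(3,4) by (simp add: K66_layer_edge split: if_splits)
  then show ?thesis
    unfolding ij(3) ij'(3) edge_seg_doubleton K66_position_def
    by (metis closed_segment_disjoint_if_same_side same_side_of_int Int_commute)
qed

lemma K66_two_layers: "geom_layered K66_V K66_E 2"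
proof (rule geom_layered_if_general_position)
  show "\<exists>u\<in>K66_V. \<exists>v\<in>K66_V. u \<noteq> v \<and> e = {u, v}" if "e \<in> K66_E" for e
    using that by (auto simp: K66_E_iff K66_V_def)
  show "general_position K66_V K66_position"
    using K66_general_position_check unfolding general_position_def K66_position_def orient_of_int
    by simp
  show "\<exists>w\<in>K66_V. w \<noteq> u \<and> w \<noteq> v" for u v
  proof -
    have "{Inl 0, Inl 1, Inl 2} - {u, v} \<noteq> {}" by auto
    moreover have "{Inl 0, Inl 1, Inl 2} \<subseteq> K66_V" by (auto simp: K66_V_def)
    ultimately show ?thesis by blast
  qed
  show "K66_layer e < 2" for e by (simp add: K66_layer_def)
qed (rule K66_same_layer_disjoint)

lemma K66_at_least_two_layers:
  assumes "geom_layered K66_V K66_E k"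
  shows "2 \<le> k"
proof (rule ccontr)
  assume "\<not> 2 \<le> k"
  from assms obtain p :: "nat + nat \<Rightarrow> real \<times> real" and L where
    L: "\<forall>e\<in>K66_E. L e < k" and
    layers: "\<forall>e\<in>K66_E. \<forall>e'\<in>K66_E. e \<noteq> e' \<and> L e = L e' \<longrightarrow>
      edge_seg p e \<inter> edge_seg p e' \<subseteq> p ` (e \<inter> e')"
    unfolding geom_layered_def by auto
  have "closed_segment (p (Inl a)) (p (Inr x)) \<inter> closed_segment (p (Inl b)) (p (Inr y)) = {}"
    if "a < 3" "b < 3" "x < 3" "y < 3" "a \<noteq> b" "x \<noteq> y" for a b x y
  proof -
    have edges: "{Inl a, Inr x} \<in> K66_E" "{Inl b, Inr y} \<in> K66_E"
      using that unfolding K66_E_def by force+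
    then have "L {Inl a, Inr x} < k" "L {Inl b, Inr y} < k" using L by blast+
    then have "L {Inl a, Inr x} = L {Inl b, Inr y}" using \<open>\<not> 2 \<le> k\<close> by linarith
    moreover have "{Inl a, Inr x} \<noteq> {Inl b, Inr y}" "{Inl a, Inr x} \<inter> {Inl b, Inr y} = {}"
      using that by auto
    ultimately have "edge_seg p {Inl a, Inr x} \<inter> edge_seg p {Inl b, Inr y} \<subseteq> p ` {}"
      using layers edges by metis
    then show ?thesis by (simp add: edge_seg_doubleton)
  qed
  then show False using K33_independent_edges_cross[of "\<lambda>i. p (Inl i)" "\<lambda>j. p (Inr j)"] by blast
qed

theorem mainTheorem9:
  shows "geometric_thickness K66_V K66_E = 2"
  unfolding geometric_thickness_def
proof (rule Least_equality)
  show "geom_layered K66_V K66_E 2" by (rule K66_two_layers)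
qed (rule K66_at_least_two_layers)

end
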